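(* Let $q$ be a power of an odd prime with $q\equiv 3\pmod 4$ and let $k\equiv 0\pmod 4$ be a positive integer. Let $Q(x)=-x_1^2+\sum_{i=2}^k x_i^2$, $C_k=\{x\in\mathbb{F}_q^k: Q(x)=0\}$, and let $G_{Q,k}$ be the Cayley graph on $\mathbb{F}_q^k$ in which $x,y$ are adjacent iff $x-y\in C_k$. For every set $W\subset\mathbb{F}_q^k$, \[ e(W,W)\le\frac{|W|^2}{q}+q^{\frac{k-2}{2}}|W|, \] where $e(W,W)$ is the number of edges of $G_{Q,k}$ in $W$.
   Context: Here $e(W,W)$ counts (as in the expander mixing lemma) the ordered pairs $(x,y)\in W\times W$ with $x-y\in C_k$. *)

theory Defs
  imports Complex_Main
begin

text \<open>Vectors of F_q^k, represented as functions on nat that vanish at indices >= k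
  (coordinates are indexed 0..k-1; coordinate 0 plays the role of x_1).\<close>
definition fvec :: "nat \<Rightarrow> (nat \<Rightarrow> 'a::zero) set" where
  "fvec k = {x. \<forall>i\<ge>k. x i = 0}"

definition Qform :: "nat \<Rightarrow> (nat \<Rightarrow> 'a::comm_ring_1) \<Rightarrow> 'a" where
  "Qform k x = (\<Sum>i\<in>{1..<k}. (x i)^2) - (x 0)^2"

definition cone :: "nat \<Rightarrow> (nat \<Rightarrow> 'a::comm_ring_1) set" where
  "cone k = {x \<in> fvec k. Qform k x = 0}"

definition edges_in :: "nat \<Rightarrow> (nat \<Rightarrow> 'a::comm_ring_1) set \<Rightarrow> nat" where
  "edges_in k W = card {(x, y). x \<in> W \<and> y \<in> W \<and> (\<lambda>i. x i - y i) \<in> cone k}"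

end

(*
  Fourier analysis on F_q^k with a nontrivial additive character psi.  With
  C^(m) = sum_{c in C_k} psi(m.c) and W^(m) = sum_{x in W} psi(m.x), orthogonality of
  characters gives q^k e(W,W) = sum_m C^(m) |W^(m)|^2, and Parseval gives
  sum_m |W^(m)|^2 = q^k |W|.  Hence, if C^(m) <= b for all m <> 0, then
  e(W,W) <= (|C_k| - b) |W|^2 / q^k + b |W|.

  To evaluate C^(m), detect Q(c) = 0 by averaging psi(s Q(c)) over s and complete the
  squares coordinatewise; this turns C^(m) into products of quadratic Gauss sums
  G(a) = sum_x psi(a x^2).  As q = 3 mod 4, -1 is not a square, so G(-a) = -G(a) and
  G(a)^2 = -q; for k = 0 mod 4 the signs combine to
  C^(m) = q^(k-1) [m = 0] - q^(k/2-1) (q [Q(m) = 0] - 1).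
  So b = q^(k/2-1) works, and |C_k| - b = q^(k-1) - q^(k/2) <= q^(k-1).
*)

theory Submission
  imports
    Defs
    "HOL-Number_Theory.Residues"
    "HOL-Library.Cardinality"
    "HOL-Library.FuncSet"
    "HOL-Library.Function_Algebras"
begin

section \<open>Finite fields\<close>

lemma two_neq_zero_if_odd_card:
  assumes "odd CARD('a)"
  shows "(2::'a::{finite,ring_1}) \<noteq> 0"
proof
  assume "(2::'a) = 0"
  then have "CHAR('a) dvd 2"
    using of_nat_eq_0_iff_char_dvd[of 2, where 'a='a] by simp
  then have "CHAR('a) dvd gcd 2 CARD('a)"
    using CHAR_dvd_CARD by simp
  also have "gcd 2 CARD('a) = 1"
    using assms by simp
  finally show False by simp
qed

lemma two_neq_zero_if_minus_one_not_square:
  assumes "\<And>x::'a::comm_ring_1. x ^ 2 \<noteq> -1"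
  shows "(2::'a) \<noteq> 0"
proof
  assume "(2::'a) = 0"
  then have "(1::'a) ^ 2 = -1"
    by (simp add: eq_neg_iff_add_eq_0 one_add_one)
  with assms show False
    by blast
qed

lemma finite_field_power_card_minus_one:
  fixes x :: "'a::{finite,field}"
  assumes "x \<noteq> 0"
  shows "x ^ (CARD('a) - 1) = 1"
proof -
  have "(\<Prod>y\<in>UNIV-{0}. x * y) = x ^ (CARD('a) - 1) * \<Prod>(UNIV-{0})"
    by (simp add: prod.distrib mult_ac)
  moreover have "(\<Prod>y\<in>UNIV-{0}. x * y) = \<Prod>(UNIV-{0})"
    by (rule prod.reindex_bij_witness[of _ "\<lambda>y. y / x" "\<lambda>y. x * y"]) (use assms in auto)
  ultimately show ?thesis
    by simp
qed

lemma minus_one_not_square: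
  assumes "CARD('a) mod 4 = 3"
  shows "x ^ 2 \<noteq> (-1 :: 'a::{finite,field})"
proof
  assume x: "x ^ 2 = -1"
  define t where "t = CARD('a) div 4"
  have t: "CARD('a) - 1 = 2 * (2 * t + 1)"
    using assms unfolding t_def by presburger
  have "x \<noteq> 0"
    using x by auto
  then have "(1::'a) = x ^ (CARD('a) - 1)"
    by (rule finite_field_power_card_minus_one[symmetric])
  also have "\<dots> = (x ^ 2) ^ (2 * t + 1)"
    by (simp only: t power_mult)
  also have "\<dots> = -1"
    using x by simp
  finally have "(2::'a) = 0"
    by (metis add.left_inverse one_add_one)
  moreover have "odd CARD('a)"
    using assms by presburger
  ultimately show False
    using two_neq_zero_if_odd_card by blast
qed

lemma card_square_roots_le_two: "card {x::'a::idom. x ^ 2 = y} \<le> 2"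
proof (cases "\<exists>r. r ^ 2 = y")
  case True
  then obtain r where r: "r ^ 2 = y" by blast
  have "{x. x ^ 2 = y} \<subseteq> {r, -r}"
  proof
    fix x assume "x \<in> {x. x ^ 2 = y}"
    then have "(x - r) * (x + r) = 0"
      using r by (simp add: algebra_simps power2_eq_square)
    then show "x \<in> {r, -r}"
      by (auto simp: eq_neg_iff_add_eq_0)
  qed
  then have "card {x. x ^ 2 = y} \<le> card {r, -r}"
    by (simp add: card_mono)
  also have "\<dots> \<le> 2"
    by (simp add: card_insert_le_m1)
  finally show ?thesis .
qed simp

lemma sum_card_square_roots: "(\<Sum>y\<in>UNIV. card {x::'a::{finite,monoid_mult}. x ^ 2 = y}) = CARD('a)"
  using sum.group[of UNIV UNIV "\<lambda>x::'a. x ^ 2" "\<lambda>_. 1::nat"] by simp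

lemma card_square_roots_add_card_square_roots_uminus:
  fixes y :: "'a::{finite,field}"
  assumes nonsquare: "\<And>x::'a. x ^ 2 \<noteq> -1"
  shows "card {x. x ^ 2 = y} + card {x. x ^ 2 = -y} = 2"
proof -
  let ?r = "\<lambda>y::'a. card {x. x ^ 2 = y} + card {x. x ^ 2 = -y}"
  \<comment> \<open>y and -y cannot both be nonzero squares, since -1 is not a square\<close>
  have le: "?r y \<le> 2" for y
  proof (cases "y = 0")
    case False
    have "{x. x ^ 2 = y} = {} \<or> {x. x ^ 2 = -y} = {}"
    proof (rule ccontr)
      assume "\<not> ?thesis"
      then obtain x w where "x ^ 2 = y" "w ^ 2 = -y" by blast
      then have "(w / x) ^ 2 = -1"
        using False by (auto simp: power_divide)
      with nonsquare show False by blast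
    qed
    then show ?thesis
      using card_square_roots_le_two[of y] card_square_roots_le_two[of "-y"] by auto
  qed simp
  have "(\<Sum>y\<in>UNIV. card {x::'a. x ^ 2 = -y}) = (\<Sum>y\<in>UNIV. card {x::'a. x ^ 2 = y})"
    by (rule sum.reindex_bij_witness[of _ uminus uminus]) auto
  then have "(\<Sum>y\<in>UNIV. ?r y) = (\<Sum>y::'a\<in>UNIV. 2)"
    by (simp add: sum.distrib sum_card_square_roots)
  then show ?thesis
    by (rule sum_mono_inv[of ?r UNIV "\<lambda>_. 2"]) (use le in auto)
qed

lemma sum_comp_eq_sum_card_fibres:
  fixes g :: "'a::finite \<Rightarrow> 'b::finite" and f :: "'b \<Rightarrow> 'c::semiring_1"
  shows "(\<Sum>x\<in>UNIV. f (g x)) = (\<Sum>y\<in>UNIV. of_nat (card {x. g x = y}) * f y)"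
proof -
  have "(\<Sum>x\<in>UNIV. f (g x)) = (\<Sum>y\<in>UNIV. \<Sum>x\<in>{x. g x = y}. f (g x))"
    using sum.group[of UNIV UNIV g "\<lambda>x. f (g x)"] by simp
  also have "\<dots> = (\<Sum>y\<in>UNIV. of_nat (card {x. g x = y}) * f y)"
    by (intro sum.cong refl) simp
  finally show ?thesis .
qed

section \<open>Additive characters\<close>

locale add_char =
  fixes \<psi> :: "'a::{finite,ab_group_add} \<Rightarrow> complex"
  assumes char_add: "\<psi> (x + y) = \<psi> x * \<psi> y"
    and norm_char: "cmod (\<psi> x) = 1"
    and char_nontrivial: "\<exists>g. \<psi> g \<noteq> 1"
begin

lemma char_zero: "\<psi> 0 = 1"
proof -
  have "\<psi> 0 * \<psi> 0 = \<psi> 0 * 1"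
    using char_add[of 0 0] by simp
  moreover have "\<psi> 0 \<noteq> 0"
    using norm_char[of 0] by auto
  ultimately show ?thesis
    by (metis mult_left_cancel)
qed

lemma char_uminus: "\<psi> (- x) = cnj (\<psi> x)"
proof -
  have "\<psi> (- x) * \<psi> x = cnj (\<psi> x) * \<psi> x"
    using char_add[of "-x" x] complex_norm_square[of "\<psi> x"] norm_char[of x]
    by (simp add: char_zero mult.commute)
  moreover have "\<psi> x \<noteq> 0"
    using norm_char[of x] by auto
  ultimately show ?thesis
    by simp
qed

lemma char_diff: "\<psi> (x - y) = \<psi> x * cnj (\<psi> y)"
  using char_add[of x "-y"] by (simp add: char_uminus)

lemma char_sum: "finite A \<Longrightarrow> \<psi> (sum f A) = (\<Prod>i\<in>A. \<psi> (f i))"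
  by (induction A rule: finite_induct) (auto simp: char_zero char_add)

lemma sum_char: "(\<Sum>x\<in>UNIV. \<psi> x) = 0"
proof -
  obtain g where g: "\<psi> g \<noteq> 1"
    using char_nontrivial by blast
  have "(\<Sum>x\<in>UNIV. \<psi> x) = (\<Sum>x\<in>UNIV. \<psi> (g + x))"
    by (rule sum.reindex_bij_witness[of _ "\<lambda>x. g + x" "\<lambda>x. x - g"]) auto
  also have "\<dots> = \<psi> g * (\<Sum>x\<in>UNIV. \<psi> x)"
    by (simp add: char_add sum_distrib_left)
  finally have "(\<psi> g - 1) * (\<Sum>x\<in>UNIV. \<psi> x) = 0"
    by (simp add: algebra_simps)
  with g show ?thesis
    by simp
qed

end

definition add_subgroup :: "'a::ab_group_add set \<Rightarrow> bool" where
  "add_subgroup H \<longleftrightarrow> 0 \<in> H \<and> (\<forall>a\<in>H. \<forall>b\<in>H. a - b \<in> H)"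

lemma add_subgroup_diff: "add_subgroup H \<Longrightarrow> a \<in> H \<Longrightarrow> b \<in> H \<Longrightarrow> a - b \<in> H"
  unfolding add_subgroup_def by blast

lemma add_subgroup_add: "add_subgroup H \<Longrightarrow> a \<in> H \<Longrightarrow> b \<in> H \<Longrightarrow> a + b \<in> H"
  using add_subgroup_diff[of H a "0 - b"] add_subgroup_diff[of H 0 b]
  unfolding add_subgroup_def by simp

lemma add_subgroup_of_int_mult:
  fixes h :: "'a::ring_1"
  assumes H: "add_subgroup H" and h: "h \<in> H"
  shows "of_int t * h \<in> H"
proof (induction t rule: int_induct[where k = 0])
  case base
  then show ?case
    using H by (simp add: add_subgroup_def)
next
  case (step1 i)
  then show ?case
    using add_subgroup_add[OF H _ h] by (simp add: distrib_right)
next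
  case (step2 i)
  then show ?case
    using add_subgroup_diff[OF H _ h] by (simp add: left_diff_distrib)
qed

lemma add_subgroup_join_cyclic:
  fixes g :: "'a::ring_1"
  assumes H: "add_subgroup H"
  shows "add_subgroup {of_int t * g + h |t h. h \<in> H}"
  unfolding add_subgroup_def
proof (intro conjI ballI)
  show "0 \<in> {of_int t * g + h |t h. h \<in> H}"
    using H unfolding add_subgroup_def by (intro CollectI exI[of _ "0::int"] exI[of _ 0]) simp
next
  fix a b
  assume "a \<in> {of_int t * g + h |t h. h \<in> H}" "b \<in> {of_int t * g + h |t h. h \<in> H}"
  then obtain t h t' h' where "a = of_int t * g + h" "b = of_int t' * g + h'" "h \<in> H" "h' \<in> H"
    by blast
  then have "a - b = of_int (t - t') * g + (h - h')" "h - h' \<in> H"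
    using add_subgroup_diff[OF H] by (auto simp: algebra_simps)
  then show "a - b \<in> {of_int t * g + h |t h. h \<in> H}"
    by blast
qed

lemma ex_maximal_proper_add_subgroup:
  fixes x :: "'a::{finite,ab_group_add}"
  assumes "x \<noteq> 0"
  obtains H :: "'a set" where "add_subgroup H" "H \<noteq> UNIV" "\<And>K. add_subgroup K \<Longrightarrow> H \<subset> K \<Longrightarrow> K = UNIV"
proof -
  let ?P = "\<lambda>H::'a set. add_subgroup H \<and> H \<noteq> UNIV"
  have "?P {0}"
    using assms by (auto simp: add_subgroup_def)
  moreover have "\<forall>H. ?P H \<longrightarrow> card H < Suc CARD('a)"
    using card_mono[of "UNIV::'a set"] by (simp add: less_Suc_eq_le)
  ultimately obtain H where H: "?P H" and max: "\<And>K. ?P K \<Longrightarrow> card K \<le> card H"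
    using Lattices_Big.ex_has_greatest_nat[of ?P "{0}" card "Suc CARD('a)"] by blast
  show ?thesis
  proof (rule that[of H])
    fix K assume K: "add_subgroup K" "H \<subset> K"
    show "K = UNIV"
    proof (rule ccontr)
      assume "K \<noteq> UNIV"
      then have "card K \<le> card H"
        using max K(1) by blast
      moreover have "card H < card K"
        using psubset_card_mono[OF _ K(2)] by simp
      ultimately show False
        by simp
    qed
  qed (use H in auto)
qed

lemma of_int_mult_mem_add_subgroup_iff:
  fixes g :: "'a::{finite,ring_1}"
  assumes H: "add_subgroup H"
  obtains d :: nat where "d > 0" "\<And>t. of_int t * g \<in> H \<longleftrightarrow> int d dvd t"
proof -
  have ex: "\<exists>d>0. of_nat d * g \<in> H"
    using finite_imp_CHAR_pos[where 'a='a] H by (auto simp: add_subgroup_def)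
  define d where "d = (LEAST d. d > 0 \<and> of_nat d * g \<in> H)"
  have d: "d > 0" "of_nat d * g \<in> H"
    using LeastI_ex[OF ex] unfolding d_def by auto
  have min: "of_nat e * g \<notin> H" if "0 < e" "e < d" for e
    using not_less_Least[of e "\<lambda>d. d > 0 \<and> of_nat d * g \<in> H"] that unfolding d_def by blast
  have mult_mem: "of_int (m * int d) * g \<in> H" for m
    using add_subgroup_of_int_mult[OF H d(2), of m] by (simp add: mult.assoc)
  have "of_int t * g \<in> H \<longleftrightarrow> int d dvd t" for t
  proof
    assume "int d dvd t"
    then obtain m where "t = m * int d"
      by (metis dvdE mult.commute)
    then show "of_int t * g \<in> H"
      using mult_mem by simp
  next
    assume t: "of_int t * g \<in> H"
    define r where "r = t mod int d"
    have "of_int r * g = of_int t * g - of_int (t div int d * int d) * g"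
      unfolding r_def by (simp add: minus_div_mult_eq_mod[symmetric] left_diff_distrib)
    then have "of_nat (nat r) * g \<in> H"
      using add_subgroup_diff[OF H t mult_mem] d(1) by (simp add: r_def)
    moreover have "nat r < d"
      using d(1) by (simp add: r_def nat_less_iff)
    ultimately have "nat r = 0"
      using min by blast
    moreover have "r \<ge> 0"
      using d(1) by (simp add: r_def)
    ultimately show "int d dvd t"
      by (simp add: r_def dvd_eq_mod_eq_0)
  qed
  with d(1) that show ?thesis
    by blast
qed

lemma cis_two_pi_div_cong:
  fixes d :: nat and a b :: int
  assumes "int d dvd a - b"
  shows "cis (2 * pi * of_int a / d) = cis (2 * pi * of_int b / d)"
proof (cases "d = 0")
  case False
  obtain m where "a - b = int d * m"
    using assms by (rule dvdE)
  then have "a = b + int d * m"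
    by simp
  then have "2 * pi * of_int a / d = 2 * pi * of_int b / d + 2 * pi * of_int m"
    using False by (simp add: field_simps)
  then show ?thesis
    by (simp flip: cis_mult)
qed simp

lemma cis_two_pi_div_neq_one:
  fixes d :: nat
  assumes "d > 1"
  shows "cis (2 * pi / d) \<noteq> 1"
proof
  assume cis: "cis (2 * pi / d) = 1"
  have "2 * pi / d \<le> pi"
    using assms by (simp add: field_simps)
  moreover have "0 < 2 * pi / d"
    using assms by simp
  ultimately have "cos (2 * pi / d) < cos 0"
    by (intro cos_monotone_0_pi) auto
  also have "cos (2 * pi / d) = Re (cis (2 * pi / d))"
    by simp
  finally show False
    using cis by simp
qed

lemma ex_add_subgroup_cyclic_quotient:
  obtains H :: "'a::{finite,ring_1} set" and g
  where "add_subgroup H" "g \<notin> H" "\<And>x. \<exists>t. x - of_int t * g \<in> H"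
proof -
  obtain H :: "'a set" where H: "add_subgroup H" "H \<noteq> UNIV"
    and max: "\<And>K. add_subgroup K \<Longrightarrow> H \<subset> K \<Longrightarrow> K = UNIV"
    using ex_maximal_proper_add_subgroup[of "1::'a"] by auto
  obtain g where g: "g \<notin> H"
    using H(2) by blast
  have "H \<subset> {of_int t * g + h |t h. h \<in> H}"
  proof -
    have "h \<in> {of_int t * g + h |t h. h \<in> H}" if "h \<in> H" for h
      using that by (intro CollectI exI[of _ "0::int"] exI[of _ h]) simp
    moreover have "g \<in> {of_int t * g + h |t h. h \<in> H}"
      using H(1) unfolding add_subgroup_def by (intro CollectI exI[of _ "1::int"] exI[of _ 0]) simp
    ultimately show ?thesis
      using g by blast
  qed
  then have span: "{of_int t * g + h |t h. h \<in> H} = UNIV"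
    using max add_subgroup_join_cyclic[OF H(1)] by blast
  have "\<exists>t. x - of_int t * g \<in> H" for x
  proof -
    obtain t h where "x = of_int t * g + h" "h \<in> H"
      using span by blast
    then show ?thesis
      by (intro exI[of _ t]) simp
  qed
  with H(1) g that show ?thesis
    by blast
qed

(* With d the order of g modulo H, the character sends t g + H to exp(2 pi i t / d). *)
lemma add_char_of_cyclic_quotient:
  fixes g :: "'a::{finite,ring_1}"
  assumes H: "add_subgroup H" and g: "g \<notin> H" and coset: "\<And>x. \<exists>t. x - of_int t * g \<in> H"
  shows "\<exists>\<psi> :: 'a \<Rightarrow> complex. add_char \<psi>"
proof -
  obtain d where "d > 0" and dvd_iff: "\<And>t. of_int t * g \<in> H \<longleftrightarrow> int d dvd t"
    using of_int_mult_mem_add_subgroup_iff[OF H] by blast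
  moreover have "d \<noteq> 1"
    using dvd_iff[of 1] g by auto
  ultimately have "d > 1"
    by simp
  define idx where "idx x = (SOME t. x - of_int t * g \<in> H)" for x
  have idx: "x - of_int (idx x) * g \<in> H" for x
    unfolding idx_def using someI_ex[OF coset] .
  have idx_add: "int d dvd idx x + idx y - idx (x + y)" for x y
  proof -
    have "of_int (idx x + idx y - idx (x + y)) * g
        = ((x + y) - of_int (idx (x + y)) * g) - (x - of_int (idx x) * g) - (y - of_int (idx y) * g)"
      by (simp add: algebra_simps)
    also have "\<dots> \<in> H"
      by (intro add_subgroup_diff[OF H] idx)
    finally show ?thesis
      by (simp only: dvd_iff)
  qed
  have idx_g: "int d dvd 1 - idx g"
    using idx[of g] dvd_iff[of "1 - idx g"] by (simp add: algebra_simps)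
  define \<psi> where "\<psi> x = cis (2 * pi * of_int (idx x) / d)" for x
  have "add_char \<psi>"
  proof
    fix x y
    have "\<psi> (x + y) = cis (2 * pi * of_int (idx x + idx y) / d)"
      unfolding \<psi>_def by (rule cis_two_pi_div_cong) (use idx_add in \<open>simp add: dvd_diff_commute\<close>)
    then show "\<psi> (x + y) = \<psi> x * \<psi> y"
      by (simp add: \<psi>_def cis_mult add_divide_distrib distrib_left)
  next
    have "\<psi> g = cis (2 * pi * of_int 1 / d)"
      unfolding \<psi>_def by (rule cis_two_pi_div_cong) (use idx_g in \<open>simp add: dvd_diff_commute\<close>)
    then have "\<psi> g \<noteq> 1"
      using cis_two_pi_div_neq_one[OF \<open>d > 1\<close>] by simp
    then show "\<exists>g. \<psi> g \<noteq> 1" ..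
  qed (simp add: \<psi>_def)
  then show ?thesis
    by blast
qed

theorem ex_add_char: "\<exists>\<psi> :: 'a::{finite,ring_1} \<Rightarrow> complex. add_char \<psi>"
proof -
  obtain H :: "'a set" and g where "add_subgroup H" "g \<notin> H" "\<And>x. \<exists>t. x - of_int t * g \<in> H"
    using ex_add_subgroup_cyclic_quotient by blast
  then show ?thesis
    by (rule add_char_of_cyclic_quotient)
qed

section \<open>Vectors and the quadratic form Q\<close>

lemma bij_betw_restrict_fvec: "bij_betw (\<lambda>x. restrict x {..<k}) (fvec k) (PiE {..<k} (\<lambda>_. UNIV))"
proof (rule bij_betw_byWitness[where f' = "\<lambda>h i. if i < k then h i else 0"])
  show "\<forall>x\<in>fvec k. (\<lambda>i. if i < k then restrict x {..<k} i else 0) = x"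
    by (auto simp: fvec_def fun_eq_iff)
  show "\<forall>h\<in>PiE {..<k} (\<lambda>_. UNIV). restrict (\<lambda>i. if i < k then h i else 0) {..<k} = h"
    by (auto simp: PiE_iff extensional_def fun_eq_iff)
  show "(\<lambda>x. restrict x {..<k}) ` fvec k \<subseteq> PiE {..<k} (\<lambda>_. UNIV)"
    by (intro image_subsetI) simp
  show "(\<lambda>h i. if i < k then h i else 0) ` PiE {..<k} (\<lambda>_. UNIV) \<subseteq> fvec k"
    by (intro image_subsetI) (simp add: fvec_def)
qed

lemma finite_fvec: "finite (fvec k :: (nat \<Rightarrow> 'a::{finite,zero}) set)"
proof -
  have "finite (PiE {..<k} (\<lambda>_. UNIV :: 'a set))"
    by (intro finite_PiE) auto
  then show ?thesis
    by (rule bij_betw_finite[OF bij_betw_restrict_fvec, THEN iffD2])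
qed

lemma sum_fvec_prod:
  fixes f :: "nat \<Rightarrow> 'a::{finite,zero} \<Rightarrow> 'b::comm_semiring_1"
  shows "(\<Sum>x\<in>fvec k. \<Prod>i<k. f i (x i)) = (\<Prod>i<k. \<Sum>a\<in>UNIV. f i a)"
proof -
  have "(\<Sum>x\<in>fvec k. \<Prod>i<k. f i (x i)) = (\<Sum>x\<in>fvec k. \<Prod>i<k. f i (restrict x {..<k} i))"
    by (intro sum.cong prod.cong) auto
  also have "\<dots> = (\<Sum>h\<in>PiE {..<k} (\<lambda>_. UNIV). \<Prod>i<k. f i (h i))"
    by (rule sum.reindex_bij_betw[OF bij_betw_restrict_fvec])
  also have "\<dots> = (\<Prod>i<k. \<Sum>a\<in>UNIV. f i a)"
    by (simp add: prod_sum_PiE)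
  finally show ?thesis .
qed

lemma zero_in_fvec: "0 \<in> fvec k"
  by (simp add: fvec_def)

lemma diff_in_fvec:
  fixes x y :: "nat \<Rightarrow> 'a::ab_group_add"
  shows "x \<in> fvec k \<Longrightarrow> y \<in> fvec k \<Longrightarrow> x - y \<in> fvec k"
  by (simp add: fvec_def)

lemma fvec_eq_zero_iff: "x \<in> fvec k \<Longrightarrow> x = 0 \<longleftrightarrow> (\<forall>i<k. x i = 0)"
  unfolding fvec_def by (auto simp: fun_eq_iff) (meson leI)

definition dot :: "nat \<Rightarrow> (nat \<Rightarrow> 'a::comm_ring_1) \<Rightarrow> (nat \<Rightarrow> 'a) \<Rightarrow> 'a" where
  "dot k m x = (\<Sum>i<k. m i * x i)"

lemma dot_commute: "dot k m x = dot k x m"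
  by (simp add: dot_def mult.commute)

lemma dot_zero_left [simp]: "dot k 0 x = 0"
  by (simp add: dot_def)

lemma dot_zero_right [simp]: "dot k m 0 = 0"
  by (simp add: dot_def)

lemma dot_diff_right: "dot k m (x - y) = dot k m x - dot k m y"
  by (simp add: dot_def right_diff_distrib sum_subtractf)

definition Qform_coeff :: "nat \<Rightarrow> 'a::comm_ring_1" where
  "Qform_coeff i = (if i = 0 then -1 else 1)"

lemma Qform_eq_sum_coeff:
  assumes "0 < k"
  shows "Qform k x = (\<Sum>i<k. Qform_coeff i * x i ^ 2)"
proof -
  have "{..<k} = insert 0 {1..<k}"
    using assms by auto
  then show ?thesis
    by (simp add: Qform_def Qform_coeff_def)
qed

lemma card_pairs_diff_mem_eq_sum:
  assumes "finite W"
  shows "card {(x, y). x \<in> W \<and> y \<in> W \<and> x - y \<in> C} = (\<Sum>x\<in>W. \<Sum>y\<in>W. if x - y \<in> C then 1 else 0)"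
proof -
  have "{(x, y). x \<in> W \<and> y \<in> W \<and> x - y \<in> C} = {p \<in> W \<times> W. fst p - snd p \<in> C}"
    by auto
  then show ?thesis
    using assms
    by (simp add: card_eq_sum sum.inter_filter sum.cartesian_product case_prod_beta del: sum_constant
        cong: if_cong)
qed

section \<open>Character sums over a finite field\<close>

locale field_add_char = add_char \<psi> for \<psi> :: "'a::{finite,field} \<Rightarrow> complex"
begin

lemma sum_char_mult: "(\<Sum>x\<in>UNIV. \<psi> (a * x)) = (if a = 0 then of_nat CARD('a) else 0)"
proof (cases "a = 0")
  case False
  have "(\<Sum>x\<in>UNIV. \<psi> (a * x)) = (\<Sum>x\<in>UNIV. \<psi> x)"
    by (rule sum.reindex_bij_witness[of _ "\<lambda>x. x / a" "\<lambda>x. a * x"]) (use False in auto)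
  with False show ?thesis
    by (simp add: sum_char)
qed (simp add: char_zero)

lemma sum_char_div_nonzero: "(\<Sum>s\<in>UNIV - {0}. \<psi> (c / s)) = (\<Sum>s\<in>UNIV. \<psi> (c * s)) - 1"
proof -
  have "(\<Sum>s\<in>UNIV - {0}. \<psi> (c / s)) = (\<Sum>s\<in>UNIV - {0}. \<psi> (c * s))"
    by (rule sum.reindex_bij_witness[of _ inverse inverse]) (auto simp: field_simps)
  also have "\<dots> = (\<Sum>s\<in>UNIV. \<psi> (c * s)) - 1"
    by (simp add: sum_diff1 char_zero)
  finally show ?thesis .
qed

definition gauss_sum :: "'a \<Rightarrow> complex" where
  "gauss_sum a = (\<Sum>x\<in>UNIV. \<psi> (a * x ^ 2))"

lemma cnj_gauss_sum: "cnj (gauss_sum a) = gauss_sum (- a)"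
  unfolding gauss_sum_def by (simp flip: char_uminus)

lemma gauss_sum_mult_cnj:
  assumes two: "(2::'a) \<noteq> 0" and "a \<noteq> 0"
  shows "gauss_sum a * cnj (gauss_sum a) = of_nat CARD('a)"
proof -
  have four: "(4::'a) \<noteq> 0"
    using two by (metis mult_2_right mult_eq_0_iff numeral_Bit0)
  have "gauss_sum a * cnj (gauss_sum a) = (\<Sum>(x, y)\<in>UNIV \<times> UNIV. \<psi> (a * ((x - y) * (x + y))))"
    unfolding gauss_sum_def
    by (simp add: sum_product sum.cartesian_product flip: char_diff)
       (simp add: power2_eq_square algebra_simps)
  \<comment> \<open>(u, v) = (x - y, x + y) is a change of variables because 2 \<noteq> 0\<close>
  also have "\<dots> = (\<Sum>(u, v)\<in>UNIV \<times> UNIV. \<psi> ((a * u) * v))"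
    by (rule sum.reindex_bij_witness[of _ "\<lambda>(u, v). ((u + v) / 2, (v - u) / 2)" "\<lambda>(x, y). (x - y, x + y)"])
       (use two four in \<open>auto simp: field_simps\<close>)
  also have "\<dots> = (\<Sum>u\<in>UNIV. \<Sum>v\<in>UNIV. \<psi> ((a * u) * v))"
    by (simp add: sum.cartesian_product)
  also have "\<dots> = (\<Sum>u\<in>UNIV. if a * u = 0 then of_nat CARD('a) else 0)"
    by (simp only: sum_char_mult)
  also have "\<dots> = of_nat CARD('a)"
    using \<open>a \<noteq> 0\<close> by simp
  finally show ?thesis .
qed

lemma gauss_sum_uminus:
  assumes nonsquare: "\<And>x::'a. x ^ 2 \<noteq> -1" and "a \<noteq> 0"
  shows "gauss_sum (- a) = - gauss_sum a"
proof -
  let ?N = "\<lambda>y::'a. card {x. x ^ 2 = y}"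
  have fibres: "gauss_sum b = (\<Sum>y\<in>UNIV. of_nat (?N y) * \<psi> (b * y))" for b
    unfolding gauss_sum_def by (rule sum_comp_eq_sum_card_fibres)
  have "gauss_sum (- a) = (\<Sum>y\<in>UNIV. of_nat (?N (- y)) * \<psi> (a * y))"
    unfolding fibres by (rule sum.reindex_bij_witness[of _ uminus uminus]) auto
  then have "gauss_sum a + gauss_sum (- a) = (\<Sum>y\<in>UNIV. of_nat (?N y + ?N (- y)) * \<psi> (a * y))"
    by (simp add: fibres sum.distrib distrib_right)
  also have "\<dots> = 2 * (\<Sum>y\<in>UNIV. \<psi> (a * y))"
    by (simp add: card_square_roots_add_card_square_roots_uminus[OF nonsquare] sum_distrib_left)
  also have "\<dots> = 0"
    using \<open>a \<noteq> 0\<close> by (simp add: sum_char_mult)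
  finally show ?thesis
    by (simp add: eq_neg_iff_add_eq_0 add.commute)
qed

lemma gauss_sum_square:
  assumes nonsquare: "\<And>x::'a. x ^ 2 \<noteq> -1" and "a \<noteq> 0"
  shows "gauss_sum a ^ 2 = - of_nat CARD('a)"
proof -
  have "- (gauss_sum a ^ 2) = of_nat CARD('a)"
    using gauss_sum_mult_cnj[OF two_neq_zero_if_minus_one_not_square[OF nonsquare] \<open>a \<noteq> 0\<close>]
    by (simp add: cnj_gauss_sum gauss_sum_uminus[OF assms] power2_eq_square)
  then show ?thesis
    by (simp add: equation_minus_iff)
qed

lemma sum_char_quadratic:
  assumes two: "(2::'a) \<noteq> 0" and "a \<noteq> 0"
  shows "(\<Sum>x\<in>UNIV. \<psi> (a * x ^ 2 + b * x)) = \<psi> (- (b ^ 2 / (4 * a))) * gauss_sum a"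
proof -
  have four: "(4::'a) \<noteq> 0"
    using two by (metis mult_2_right mult_eq_0_iff numeral_Bit0)
  define c where "c = b / (2 * a)"
  have b: "b = 2 * a * c"
    using two \<open>a \<noteq> 0\<close> by (simp add: c_def)
  have "b ^ 2 / (4 * a) = a * c ^ 2"
    using four \<open>a \<noteq> 0\<close> unfolding b by (simp add: power2_eq_square field_simps)
  then have square: "a * (y - c) ^ 2 + b * (y - c) = - (b ^ 2 / (4 * a)) + a * y ^ 2" for y
    unfolding b by (simp add: power2_eq_square algebra_simps)
  have "(\<Sum>x\<in>UNIV. \<psi> (a * x ^ 2 + b * x)) = (\<Sum>y\<in>UNIV. \<psi> (a * (y - c) ^ 2 + b * (y - c)))"
    by (rule sum.reindex_bij_witness[of _ "\<lambda>y. y - c" "\<lambda>x. x + c"]) auto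
  also have "\<dots> = \<psi> (- (b ^ 2 / (4 * a))) * gauss_sum a"
    unfolding square gauss_sum_def by (simp only: char_add sum_distrib_left)
  finally show ?thesis .
qed

lemma sum_char_dot:
  assumes "z \<in> fvec k"
  shows "(\<Sum>m\<in>fvec k. \<psi> (dot k m z)) = (if z = 0 then of_nat CARD('a) ^ k else 0)"
proof -
  have "(\<Sum>m\<in>fvec k. \<psi> (dot k m z)) = (\<Sum>m\<in>fvec k. \<Prod>i<k. \<psi> (z i * m i))"
    by (simp add: dot_def char_sum mult.commute)
  also have "\<dots> = (\<Prod>i<k. \<Sum>a\<in>UNIV. \<psi> (z i * a))"
    by (rule sum_fvec_prod)
  also have "\<dots> = (\<Prod>i<k. if z i = 0 then of_nat CARD('a) else 0)"
    by (simp only: sum_char_mult)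
  also have "\<dots> = (if z = 0 then of_nat CARD('a) ^ k else 0)"
  proof (cases "z = 0")
    case False
    then obtain i where "i < k" "z i \<noteq> 0"
      using fvec_eq_zero_iff[OF assms] by blast
    with False show ?thesis
      by auto
  qed simp
  finally show ?thesis .
qed

lemma sum_char_diagonal_quadratic:
  assumes "(2::'a) \<noteq> 0" and "\<And>i. i < k \<Longrightarrow> c i \<noteq> 0"
  shows "(\<Sum>x\<in>fvec k. \<psi> (\<Sum>i<k. c i * x i ^ 2 + m i * x i))
    = (\<Prod>i<k. \<psi> (- (m i ^ 2 / (4 * c i))) * gauss_sum (c i))"
proof -
  have "(\<Sum>x\<in>fvec k. \<psi> (\<Sum>i<k. c i * x i ^ 2 + m i * x i))
      = (\<Prod>i<k. \<Sum>a\<in>UNIV. \<psi> (c i * a ^ 2 + m i * a))"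
    unfolding char_sum[OF finite_lessThan]
    by (rule sum_fvec_prod[where f = "\<lambda>i a. \<psi> (c i * a ^ 2 + m i * a)"])
  also have "\<dots> = (\<Prod>i<k. \<psi> (- (m i ^ 2 / (4 * c i))) * gauss_sum (c i))"
    using assms by (intro prod.cong refl sum_char_quadratic) auto
  finally show ?thesis .
qed

lemma prod_gauss_sum_Qform_coeff:
  assumes nonsquare: "\<And>x::'a. x ^ 2 \<noteq> -1"
    and "0 < k" "k mod 4 = 0" "s \<noteq> 0"
  shows "(\<Prod>i<k. gauss_sum (s * Qform_coeff i)) = - (of_nat CARD('a) ^ (k div 2))"
proof -
  have "{..<k} = insert 0 {1..<k}"
    using \<open>0 < k\<close> by auto
  then have "(\<Prod>i<k. gauss_sum (s * Qform_coeff i)) = gauss_sum (- s) * gauss_sum s ^ (k - 1)"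
    by (simp add: Qform_coeff_def)
  also have "\<dots> = - (gauss_sum s ^ Suc (k - 1))"
    by (simp add: gauss_sum_uminus[OF nonsquare \<open>s \<noteq> 0\<close>])
  also have "Suc (k - 1) = 2 * (k div 2)"
    using \<open>0 < k\<close> \<open>k mod 4 = 0\<close> by presburger
  also have "gauss_sum s ^ (2 * (k div 2)) = of_nat CARD('a) ^ (k div 2)"
  proof -
    have "even (k div 2)"
      using \<open>k mod 4 = 0\<close> by presburger
    then show ?thesis
      by (simp add: power_mult gauss_sum_square[OF nonsquare \<open>s \<noteq> 0\<close>])
  qed
  finally show ?thesis .
qed

lemma sum_char_Qform:
  assumes nonsquare: "\<And>x::'a. x ^ 2 \<noteq> -1"
    and k: "0 < k" "k mod 4 = 0" and "s \<noteq> 0"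
  shows "(\<Sum>x\<in>fvec k. \<psi> (s * Qform k x + dot k m x))
    = - (of_nat CARD('a) ^ (k div 2)) * \<psi> (- (Qform k m / (4 * s)))"
proof -
  have two: "(2::'a) \<noteq> 0"
    using two_neq_zero_if_minus_one_not_square[OF nonsquare] .
  have coeff: "s * Qform_coeff i \<noteq> 0" for i
    using \<open>s \<noteq> 0\<close> by (simp add: Qform_coeff_def)
  have diagonal: "s * Qform k x + dot k m x = (\<Sum>i<k. (s * Qform_coeff i) * x i ^ 2 + m i * x i)" for x
    by (simp add: Qform_eq_sum_coeff[OF k(1)] dot_def sum.distrib sum_distrib_left mult.assoc)
  have "m i ^ 2 / (4 * (s * Qform_coeff i)) = Qform_coeff i * m i ^ 2 / (4 * s)" for i
    by (simp add: Qform_coeff_def)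
  then have exponent: "(\<Sum>i<k. - (m i ^ 2 / (4 * (s * Qform_coeff i)))) = - (Qform k m / (4 * s))"
    by (simp add: Qform_eq_sum_coeff[OF k(1)] sum_divide_distrib sum_negf)
  have "(\<Prod>i<k. \<psi> (- (m i ^ 2 / (4 * (s * Qform_coeff i))))) = \<psi> (- (Qform k m / (4 * s)))"
    unfolding exponent[symmetric] by (simp add: char_sum)
  moreover have "(\<Sum>x\<in>fvec k. \<psi> (s * Qform k x + dot k m x))
      = (\<Prod>i<k. \<psi> (- (m i ^ 2 / (4 * (s * Qform_coeff i))))) * (\<Prod>i<k. gauss_sum (s * Qform_coeff i))"
    unfolding diagonal sum_char_diagonal_quadratic[OF two coeff] by (rule prod.distrib)
  ultimately show ?thesis
    by (simp add: prod_gauss_sum_Qform_coeff[OF nonsquare k \<open>s \<noteq> 0\<close>])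
qed

lemma sum_cone_eq_sum_char_Qform:
  "of_nat CARD('a) * (\<Sum>c\<in>cone k. f c) = (\<Sum>s\<in>UNIV. \<Sum>c\<in>fvec k. \<psi> (s * Qform k c) * f c)"
proof -
  have "(\<Sum>c\<in>cone k. f c) = (\<Sum>c\<in>fvec k. if Qform k c = 0 then f c else 0)"
    by (simp add: cone_def sum.inter_filter finite_fvec)
  also have "of_nat CARD('a) * \<dots> = (\<Sum>c\<in>fvec k. (\<Sum>s\<in>UNIV. \<psi> (Qform k c * s)) * f c)"
    unfolding sum_distrib_left by (intro sum.cong refl) (simp add: sum_char_mult)
  also have "\<dots> = (\<Sum>s\<in>UNIV. \<Sum>c\<in>fvec k. \<psi> (s * Qform k c) * f c)"
    by (simp add: sum_distrib_right mult.commute[of _ "Qform k _"] sum.swap[of _ "fvec k"])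
  finally show ?thesis .
qed

lemma sum_cone_char_scaled:
  assumes nonsquare: "\<And>x::'a. x ^ 2 \<noteq> -1"
    and k: "0 < k" "k mod 4 = 0" and m: "m \<in> fvec k"
  shows "of_nat CARD('a) * (\<Sum>c\<in>cone k. \<psi> (dot k m c))
    = (if m = 0 then of_nat CARD('a) ^ k else 0)
      - of_nat CARD('a) ^ (k div 2) * ((if Qform k m = 0 then of_nat CARD('a) else 0) - 1)"
proof -
  let ?q = "of_nat CARD('a) :: complex"
  have four: "(4::'a) \<noteq> 0"
    using two_neq_zero_if_minus_one_not_square[OF nonsquare]
    by (metis mult_2_right mult_eq_0_iff numeral_Bit0)
  have "?q * (\<Sum>c\<in>cone k. \<psi> (dot k m c)) = (\<Sum>s\<in>UNIV. \<Sum>c\<in>fvec k. \<psi> (s * Qform k c + dot k m c))"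
    by (simp add: sum_cone_eq_sum_char_Qform char_add)
  also have "\<dots> = (\<Sum>c\<in>fvec k. \<psi> (dot k c m))
      + (\<Sum>s\<in>UNIV - {0}. \<Sum>c\<in>fvec k. \<psi> (s * Qform k c + dot k m c))"
    by (subst sum.remove[of UNIV 0]) (simp_all add: dot_commute[of k m])
  also have "(\<Sum>c\<in>fvec k. \<psi> (dot k c m)) = (if m = 0 then ?q ^ k else 0)"
    by (rule sum_char_dot[OF m])
  also have "(\<Sum>s\<in>UNIV - {0}. \<Sum>c\<in>fvec k. \<psi> (s * Qform k c + dot k m c))
      = - (?q ^ (k div 2)) * (\<Sum>s\<in>UNIV - {0}. \<psi> ((- Qform k m / 4) / s))"
    by (simp add: sum_char_Qform[OF nonsquare k] sum_distrib_left)
  also have "(\<Sum>s\<in>UNIV - {0}. \<psi> ((- Qform k m / 4) / s)) = (if Qform k m = 0 then ?q else 0) - 1"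
    unfolding sum_char_div_nonzero sum_char_mult using four by simp
  finally show ?thesis
    by (simp only: diff_conv_add_uminus mult_minus_left)
qed

lemma sum_cone_char:
  assumes nonsquare: "\<And>x::'a. x ^ 2 \<noteq> -1"
    and k: "0 < k" "k mod 4 = 0" and m: "m \<in> fvec k"
  shows "(\<Sum>c\<in>cone k. \<psi> (dot k m c))
    = of_real ((if m = 0 then real CARD('a) ^ (k - 1) else 0)
      - real CARD('a) ^ (k div 2 - 1) * ((if Qform k m = 0 then real CARD('a) else 0) - 1))"
proof -
  let ?q = "of_nat CARD('a) :: complex"
  have "?q ^ k = ?q * ?q ^ (k - 1)"
    using k(1) by (cases k) simp_all
  moreover have "?q ^ (k div 2) = ?q * ?q ^ (k div 2 - 1)"
    using k by (cases "k div 2") simp_all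
  ultimately have "?q * (\<Sum>c\<in>cone k. \<psi> (dot k m c))
    = ?q * of_real ((if m = 0 then real CARD('a) ^ (k - 1) else 0)
      - real CARD('a) ^ (k div 2 - 1) * ((if Qform k m = 0 then real CARD('a) else 0) - 1))"
    unfolding sum_cone_char_scaled[OF assms]
    by (cases "m = 0"; cases "Qform k m = 0") (simp_all add: algebra_simps)
  then show ?thesis
    by simp
qed

lemma sum_char_dot_pair:
  assumes "x \<in> fvec k" "y \<in> fvec k" "c \<in> fvec k"
  shows "(\<Sum>m\<in>fvec k. \<psi> (dot k m c) * (cnj (\<psi> (dot k m x)) * \<psi> (dot k m y)))
    = (if x - y = c then of_nat CARD('a) ^ k else 0)"
proof -
  have "c - (x - y) \<in> fvec k"
    using assms by (intro diff_in_fvec)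
  moreover have "c - (x - y) = 0 \<longleftrightarrow> x - y = c"
    by auto
  ultimately show ?thesis
    using sum_char_dot[of "c - (x - y)" k]
    by (simp add: dot_diff_right char_diff char_add mult_ac)
qed

lemma card_cone:
  assumes nonsquare: "\<And>x::'a. x ^ 2 \<noteq> -1" and k: "0 < k" "k mod 4 = 0"
  shows "real (card (cone k :: (nat \<Rightarrow> 'a) set))
    = real CARD('a) ^ (k - 1) - real CARD('a) ^ (k div 2 - 1) * (real CARD('a) - 1)"
proof -
  have "complex_of_real (card (cone k :: (nat \<Rightarrow> 'a) set)) = (\<Sum>c\<in>cone k. \<psi> (dot k 0 c))"
    by (simp add: char_zero)
  also have "\<dots> = of_real (real CARD('a) ^ (k - 1) - real CARD('a) ^ (k div 2 - 1) * (real CARD('a) - 1))"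
    using sum_cone_char[OF nonsquare k zero_in_fvec] by (simp add: Qform_def)
  finally show ?thesis
    by (simp only: of_real_eq_iff)
qed

lemma card_pairs_diff_mem_fourier:
  assumes C: "C \<subseteq> fvec k" and W: "W \<subseteq> fvec k"
  shows "of_nat CARD('a) ^ k * of_nat (card {(x, y). x \<in> W \<and> y \<in> W \<and> x - y \<in> C})
    = (\<Sum>m\<in>fvec k. (\<Sum>c\<in>C. \<psi> (dot k m c)) * of_real ((cmod (\<Sum>x\<in>W. \<psi> (dot k m x)))\<^sup>2))"
proof -
  let ?q = "of_nat CARD('a) :: complex"
  have fin: "finite C" "finite W"
    using finite_subset[OF C finite_fvec] finite_subset[OF W finite_fvec] .
  have "of_nat (card {(x, y). x \<in> W \<and> y \<in> W \<and> x - y \<in> C})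
      = (\<Sum>x\<in>W. \<Sum>y\<in>W. \<Sum>c\<in>C. if x - y = c then 1 else 0 :: complex)"
    using fin by (simp add: card_pairs_diff_mem_eq_sum if_distrib[of of_nat] cong: if_cong)
  then have "?q ^ k * of_nat (card {(x, y). x \<in> W \<and> y \<in> W \<and> x - y \<in> C})
      = (\<Sum>x\<in>W. \<Sum>y\<in>W. \<Sum>c\<in>C. if x - y = c then ?q ^ k else 0)"
    by (simp add: sum_distrib_left if_distrib[of "times _"] cong: if_cong)
  also have "\<dots> = (\<Sum>x\<in>W. \<Sum>y\<in>W. \<Sum>c\<in>C. \<Sum>m\<in>fvec k.
      \<psi> (dot k m c) * (cnj (\<psi> (dot k m x)) * \<psi> (dot k m y)))"
    using C W by (intro sum.cong refl) (simp add: sum_char_dot_pair subset_iff)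
  also have "\<dots> = (\<Sum>x\<in>W. \<Sum>y\<in>W. \<Sum>m\<in>fvec k. \<Sum>c\<in>C.
      \<psi> (dot k m c) * (cnj (\<psi> (dot k m x)) * \<psi> (dot k m y)))"
    by (rule sum.cong[OF refl], rule sum.cong[OF refl], rule sum.swap)
  also have "\<dots> = (\<Sum>x\<in>W. \<Sum>m\<in>fvec k. \<Sum>y\<in>W. \<Sum>c\<in>C.
      \<psi> (dot k m c) * (cnj (\<psi> (dot k m x)) * \<psi> (dot k m y)))"
    by (rule sum.cong[OF refl], rule sum.swap)
  also have "\<dots> = (\<Sum>m\<in>fvec k. \<Sum>x\<in>W. \<Sum>y\<in>W. \<Sum>c\<in>C.
      \<psi> (dot k m c) * (cnj (\<psi> (dot k m x)) * \<psi> (dot k m y)))"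
    by (rule sum.swap)
  also have "\<dots> = (\<Sum>m\<in>fvec k. (\<Sum>c\<in>C. \<psi> (dot k m c))
      * ((\<Sum>y\<in>W. \<psi> (dot k m y)) * cnj (\<Sum>x\<in>W. \<psi> (dot k m x))))"
    by (simp add: sum_product sum_distrib_left sum_distrib_right mult_ac)
  also have "\<dots> = (\<Sum>m\<in>fvec k. (\<Sum>c\<in>C. \<psi> (dot k m c)) * of_real ((cmod (\<Sum>x\<in>W. \<psi> (dot k m x)))\<^sup>2))"
    by (simp only: complex_norm_square)
  finally show ?thesis .
qed

lemma card_pairs_diff_mem_le:
  assumes C: "C \<subseteq> fvec k" and W: "W \<subseteq> fvec k"
    and transform: "\<And>m. m \<in> fvec k \<Longrightarrow> (\<Sum>c\<in>C. \<psi> (dot k m c)) = of_real (r m)"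
    and bound: "\<And>m. m \<in> fvec k \<Longrightarrow> m \<noteq> 0 \<Longrightarrow> r m \<le> b"
  shows "real (card {(x, y). x \<in> W \<and> y \<in> W \<and> x - y \<in> C})
    \<le> (real (card C) - b) / real CARD('a) ^ k * real (card W) ^ 2 + b * real (card W)"
proof -
  define S where "S m = (cmod (\<Sum>x\<in>W. \<psi> (dot k m x)))\<^sup>2" for m
  have fourier: "real CARD('a) ^ k * real (card {(x, y). x \<in> W \<and> y \<in> W \<and> x - y \<in> D})
      = (\<Sum>m\<in>fvec k. r' m * S m)"
    if "D \<subseteq> fvec k" "\<And>m. m \<in> fvec k \<Longrightarrow> (\<Sum>c\<in>D. \<psi> (dot k m c)) = of_real (r' m)" for D r'
  proof -
    have "complex_of_real (real CARD('a) ^ k * real (card {(x, y). x \<in> W \<and> y \<in> W \<and> x - y \<in> D}))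
        = of_real (\<Sum>m\<in>fvec k. r' m * S m)"
      using card_pairs_diff_mem_fourier[OF that(1) W] that(2) by (simp add: S_def)
    then show ?thesis
      using of_real_eq_iff by blast
  qed
  have "{(x, y). x \<in> W \<and> y \<in> W \<and> x - y \<in> {0}} = (\<lambda>x. (x, x)) ` W"
    by auto
  then have parseval: "real CARD('a) ^ k * real (card W) = (\<Sum>m\<in>fvec k. S m)"
    using fourier[of "{0}" "\<lambda>_. 1"] by (simp add: zero_in_fvec card_image inj_on_def char_zero)
  have "of_real (r 0) = complex_of_real (card C)"
    using transform[OF zero_in_fvec] by (simp add: char_zero)
  then have "r 0 = card C"
    by (simp only: of_real_eq_iff)
  moreover have "S 0 = real (card W) ^ 2"
    by (simp add: S_def char_zero)
  moreover have "(\<Sum>m\<in>fvec k - {0}. r m * S m) \<le> b * (\<Sum>m\<in>fvec k - {0}. S m)"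
    unfolding sum_distrib_left using bound by (intro sum_mono mult_right_mono) (auto simp: S_def)
  ultimately have "real CARD('a) ^ k * real (card {(x, y). x \<in> W \<and> y \<in> W \<and> x - y \<in> C})
      \<le> (real (card C) - b) * real (card W) ^ 2 + b * (real CARD('a) ^ k * real (card W))"
    using fourier[OF C transform] parseval
    by (simp add: sum.remove[OF finite_fvec zero_in_fvec] algebra_simps)
  moreover have "n \<le> a / Q * w + b * v" if "Q > 0" "Q * n \<le> a * w + b * (Q * v)" for Q n a w v :: real
    using that by (simp add: field_simps)
  ultimately show ?thesis
    by simp
qed

lemma edges_in_le:
  fixes W :: "(nat \<Rightarrow> 'a) set"
  assumes nonsquare: "\<And>x::'a. x ^ 2 \<noteq> -1"
    and k: "0 < k" "k mod 4 = 0" and W: "W \<subseteq> fvec k"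
  shows "real (edges_in k W) \<le> real (card W) ^ 2 / real CARD('a)
    + real CARD('a) ^ ((k - 2) div 2) * real (card W)"
proof -
  define q where "q = real CARD('a)"
  define b where "b = q ^ (k div 2 - 1)"
  define r where "r m = (if m = 0 then q ^ (k - 1) else 0) - b * ((if Qform k m = 0 then q else 0) - 1)"
    for m :: "nat \<Rightarrow> 'a"
  let ?C = "cone k :: (nat \<Rightarrow> 'a) set"
  have "q > 0" "b \<ge> 0"
    by (simp_all add: q_def b_def)
  have transform: "(\<Sum>c\<in>?C. \<psi> (dot k m c)) = of_real (r m)" if "m \<in> fvec k" for m
    unfolding r_def b_def q_def by (rule sum_cone_char[OF nonsquare k that])
  have bound: "r m \<le> b" if "m \<noteq> 0" for m
  proof -
    have "0 \<le> b * (if Qform k m = 0 then q else 0)"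
      using \<open>b \<ge> 0\<close> \<open>q > 0\<close> by simp
    with that show ?thesis
      by (simp add: r_def algebra_simps)
  qed
  have "(real (card ?C) - b) / q ^ k = (q ^ (k - 1) - b * q) / q ^ k"
    using card_cone[OF nonsquare k] by (simp add: q_def b_def algebra_simps)
  also have "\<dots> \<le> 1 / q"
  proof -
    have "q ^ k = q * q ^ (k - 1)"
      using k(1) by (cases k) simp_all
    moreover have "(p - b * q) / (q * p) \<le> 1 / q" if "p > 0" for p
      using that \<open>q > 0\<close> \<open>b \<ge> 0\<close> by (simp add: field_simps)
    ultimately show ?thesis
      using \<open>q > 0\<close> by simp
  qed
  moreover have "?C \<subseteq> fvec k"
    by (auto simp: cone_def)
  then have "real (card {(x, y). x \<in> W \<and> y \<in> W \<and> x - y \<in> ?C})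
      \<le> (real (card ?C) - b) / q ^ k * real (card W) ^ 2 + b * real (card W)"
    unfolding q_def by (rule card_pairs_diff_mem_le[OF _ W transform]) (use bound in auto)
  ultimately have "real (card {(x, y). x \<in> W \<and> y \<in> W \<and> x - y \<in> ?C})
      \<le> 1 / q * real (card W) ^ 2 + b * real (card W)"
    by (smt (verit) mult_right_mono zero_le_power2)
  moreover have "(k - 2) div 2 = k div 2 - 1"
    by simp
  ultimately show ?thesis
    by (simp add: edges_in_def fun_diff_def q_def b_def)
qed

end

theorem lemma5p1:
  fixes W :: "(nat \<Rightarrow> 'a::{finite, field}) set" and k :: nat
  assumes "card (UNIV :: 'a set) mod 4 = 3"
    and "k > 0" and "k mod 4 = 0"
    and "W \<subseteq> fvec k"
  shows "real (edges_in k W) \<le> real (card W)^2 / real (card (UNIV :: 'a set))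
           + real (card (UNIV :: 'a set)) ^ ((k - 2) div 2) * real (card W)"
proof -
  obtain \<psi> :: "'a \<Rightarrow> complex" where "add_char \<psi>"
    using ex_add_char by blast
  then interpret field_add_char \<psi>
    by (simp add: field_add_char_def)
  show ?thesis
    using edges_in_le[OF minus_one_not_square[OF assms(1)] assms(2-4)] .
qed

end
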